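(* Let $R$ be a left localizable ring with $\max\mathrm{Den}_l(R)=\{S_1,\ldots,S_n\}$ (distinct), where $n\geq 2$, and let $\mathfrak{a}_i:=\mathrm{ass}(S_i)$. Then for all $i=1,\ldots,n$, $$S_i\cap\bigcap_{j\neq i}\mathfrak{a}_j=\Big(\bigcap_{j\neq i}\mathfrak{a}_j\Big)\setminus\{0\}\neq\emptyset.$$
   Context: All rings are associative with $1$. A multiplicative subset $S$ of $R$ ($1\in S$, $0\notin S$, closed under multiplication) is a left Ore set if $Sr\cap Rs\neq\emptyset$ for all $r\in R$, $s\in S$; for it, $\mathrm{ass}(S):=\{r\in R: sr=0\text{ for some } s\in S\}$. A left Ore set $S$ is a left denominator set if $rs=0$ ($r\in R$, $s\in S$) implies $tr=0$ for some $t\in S$. $\max\mathrm{Den}_l(R)$ is the set of maximal elements, under inclusion, of the set of left denominator sets of $R$. A ring $R$ is left localizable if every nonzero $r\in R$ lies in some left denominator set. *)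

theory Defs
  imports Main
begin

definition mult_subset :: "'a::ring_1 set \<Rightarrow> bool" where
  "mult_subset S \<longleftrightarrow> 1 \<in> S \<and> 0 \<notin> S \<and> (\<forall>a\<in>S. \<forall>b\<in>S. a * b \<in> S)"

definition left_ore :: "'a::ring_1 set \<Rightarrow> bool" where
  "left_ore S \<longleftrightarrow> mult_subset S \<and>
     (\<forall>r. \<forall>s\<in>S. \<exists>s'\<in>S. \<exists>r'. s' * r = r' * s)"

definition ass :: "'a::ring_1 set \<Rightarrow> 'a set" where
  "ass S = {r. \<exists>s\<in>S. s * r = 0}"

definition left_den :: "'a::ring_1 set \<Rightarrow> bool" where
  "left_den S \<longleftrightarrow> left_ore S \<and>
     (\<forall>r. \<forall>s\<in>S. r * s = 0 \<longrightarrow> (\<exists>t\<in>S. t * r = 0))"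

definition maxDen_l :: "'a::ring_1 set set" where
  "maxDen_l = {S. left_den S \<and> (\<forall>T. left_den T \<longrightarrow> S \<subseteq> T \<longrightarrow> T = S)}"

definition left_localizable :: "'a::ring_1 itself \<Rightarrow> bool" where
  "left_localizable _ \<longleftrightarrow> (\<forall>r::'a. r \<noteq> 0 \<longrightarrow> (\<exists>S. left_den S \<and> r \<in> S))"

end

theory Submission
  imports Defs
begin

text \<open>Each ass S is a two-sided ideal disjoint from S, and by Zorn's lemma every nonzero element
  lies in a maximal left denominator set; so a nonzero element of the intersection of the ass T
  over the maximal T \<noteq> S can only lie in S. The heart of the argument is that distinct maximal
  S, T satisfy S \<inter> ass T \<noteq> {}. Otherwise S and T act without zero divisors on the left ideal
  cut out by all ass U that S or T meets, and that ideal contains a nonzero product of an element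
  of S and one of T; hence the monoid generated by S \<union> T avoids 0, is a left denominator set,
  and contradicts maximality. Multiplying, over all T \<noteq> S, elements of S \<inter> ass T finally gives
  a (nonzero) element of S in every such ass T.\<close>

lemma left_den_imp_mult_subset: "left_den S \<Longrightarrow> mult_subset S"
  unfolding left_den_def left_ore_def by blast

lemma left_den_imp_left_ore: "left_den S \<Longrightarrow> left_ore S"
  unfolding left_den_def by blast

lemma left_ore_common_multiple:
  "left_ore S \<Longrightarrow> s \<in> S \<Longrightarrow> \<exists>s'\<in>S. \<exists>r'. s' * r = r' * s"
  unfolding left_ore_def by blast

lemma mult_subset_disjoint_ass:
  assumes "mult_subset S"
  shows "S \<inter> ass S = {}"
proof (intro equals0I)
  fix x assume "x \<in> S \<inter> ass S"
  then obtain s where "x \<in> S" "s \<in> S" "s * x = 0" by (auto simp: ass_def)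
  with assms show False unfolding mult_subset_def by metis
qed

lemma ass_mult_left:
  assumes "left_ore S" "r \<in> ass S"
  shows "x * r \<in> ass S"
proof -
  from assms(2) obtain s where s: "s \<in> S" "s * r = 0" by (auto simp: ass_def)
  from assms(1) s(1) obtain s' r' where "s' \<in> S" "s' * x = r' * s"
    by (blast dest: left_ore_common_multiple)
  then have "s' * (x * r) = 0" using s by (metis mult.assoc mult_zero_right)
  with \<open>s' \<in> S\<close> show ?thesis by (auto simp: ass_def)
qed

lemma ass_mult_right:
  assumes "r \<in> ass S"
  shows "r * x \<in> ass S"
proof -
  from assms obtain s where "s \<in> S" "s * r = 0" by (auto simp: ass_def)
  then have "s * (r * x) = 0" by (simp flip: mult.assoc)
  with \<open>s \<in> S\<close> show ?thesis by (auto simp: ass_def)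
qed

lemma left_den_mult_zero_imp_ass:
  assumes "left_den S" "s \<in> S" "r * s = 0"
  shows "r \<in> ass S"
  using assms unfolding left_den_def ass_def by blast

lemma left_den_Union_chain:
  assumes "C \<noteq> {}" "\<forall>S\<in>C. left_den S" "\<forall>A\<in>C. \<forall>B\<in>C. A \<subseteq> B \<or> B \<subseteq> A"
  shows "left_den (\<Union>C)"
proof -
  have ms: "mult_subset S" if "S \<in> C" for S
    using that assms(2) left_den_imp_mult_subset by blast
  have "a * b \<in> \<Union>C" if "a \<in> \<Union>C" "b \<in> \<Union>C" for a b
  proof -
    from that obtain A B where AB: "A \<in> C" "B \<in> C" "a \<in> A" "b \<in> B" by blast
    from assms(3) AB(1,2) have "a \<in> B \<and> b \<in> B \<or> a \<in> A \<and> b \<in> A" using AB(3,4) by blast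
    with AB(1,2) ms show ?thesis unfolding mult_subset_def by blast
  qed
  moreover obtain S where "S \<in> C" using assms(1) by blast
  then have "1 \<in> \<Union>C" using ms unfolding mult_subset_def by blast
  moreover have "0 \<notin> \<Union>C" using ms unfolding mult_subset_def by blast
  ultimately have "mult_subset (\<Union>C)" unfolding mult_subset_def by blast
  moreover have "\<forall>r. \<forall>s\<in>\<Union>C. \<exists>s'\<in>\<Union>C. \<exists>r'. s' * r = r' * s"
  proof (intro allI ballI)
    fix r s assume "s \<in> \<Union>C"
    then obtain S where "S \<in> C" "s \<in> S" by blast
    with assms(2) obtain s' r' where "s' \<in> S" "s' * r = r' * s"
      using left_den_imp_left_ore left_ore_common_multiple by blast
    with \<open>S \<in> C\<close> show "\<exists>s'\<in>\<Union>C. \<exists>r'. s' * r = r' * s" by blast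
  qed
  moreover have "\<forall>r. \<forall>s\<in>\<Union>C. r * s = 0 \<longrightarrow> (\<exists>t\<in>\<Union>C. t * r = 0)"
  proof (intro allI ballI impI)
    fix r s assume "s \<in> \<Union>C" "r * s = 0"
    then obtain S where "S \<in> C" "s \<in> S" by blast
    with assms(2) \<open>r * s = 0\<close> have "r \<in> ass S" using left_den_mult_zero_imp_ass by blast
    then obtain t where "t \<in> S" "t * r = 0" unfolding ass_def by blast
    with \<open>S \<in> C\<close> show "\<exists>t\<in>\<Union>C. t * r = 0" by blast
  qed
  ultimately show ?thesis unfolding left_den_def left_ore_def by (intro conjI)
qed

lemma left_den_subset_maxDen_l:
  fixes T :: "'a::ring_1 set"
  assumes "left_den T"
  shows "\<exists>M\<in>maxDen_l. T \<subseteq> M"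
proof -
  let ?A = "{X. left_den X \<and> T \<subseteq> X}"
  have "\<exists>U\<in>?A. \<forall>X\<in>C. X \<subseteq> U" if C: "C \<in> chains ?A" for C
  proof (cases "C = {}")
    case True
    then show ?thesis using assms by auto
  next
    case False
    from C have "C \<subseteq> ?A" "\<forall>A\<in>C. \<forall>B\<in>C. A \<subseteq> B \<or> B \<subseteq> A"
      unfolding chains_def chain_subset_def by auto
    with False have "\<Union>C \<in> ?A" using left_den_Union_chain[OF False] by auto
    then show ?thesis by blast
  qed
  from Zorn_Lemma2[OF ballI[OF this]] obtain M
    where M: "M \<in> ?A" "\<forall>X\<in>?A. M \<subseteq> X \<longrightarrow> X = M" by blast
  have "M \<in> maxDen_l" unfolding maxDen_l_def
  proof (intro CollectI conjI allI impI)
    show "left_den M" using M(1) by blast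
    fix X assume "left_den X" "M \<subseteq> X"
    with M show "X = M" by blast
  qed
  with M(1) show ?thesis by blast
qed

lemma left_localizable_imp_in_maxDen_l:
  fixes x :: "'a::ring_1"
  assumes "left_localizable TYPE('a)" "x \<noteq> 0"
  shows "\<exists>S\<in>maxDen_l. x \<in> S"
  using assms left_den_subset_maxDen_l unfolding left_localizable_def by blast

lemma maxDen_l_imp_left_den: "S \<in> maxDen_l \<Longrightarrow> left_den S"
  unfolding maxDen_l_def by blast

lemma maxDen_l_maximal: "S \<in> maxDen_l \<Longrightarrow> left_den T \<Longrightarrow> S \<subseteq> T \<Longrightarrow> T = S"
  unfolding maxDen_l_def by blast

inductive_set mult_closure :: "'a::ring_1 set \<Rightarrow> 'a set" for X where
  one: "1 \<in> mult_closure X"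
| base: "x \<in> X \<Longrightarrow> x \<in> mult_closure X"
| mult: "u \<in> mult_closure X \<Longrightarrow> v \<in> mult_closure X \<Longrightarrow> u * v \<in> mult_closure X"

lemma subset_mult_closure: "X \<subseteq> mult_closure X"
  by (auto intro: mult_closure.base)

lemma mult_closure_ore:
  assumes "\<forall>x\<in>X. \<forall>r. \<exists>s\<in>mult_closure X. \<exists>r'. s * r = r' * x"
    and "u \<in> mult_closure X"
  shows "\<exists>s\<in>mult_closure X. \<exists>r'. s * r = r' * u"
  using assms(2)
proof (induction arbitrary: r)
  case one
  show ?case by (metis mult_closure.one mult_1_left mult_1_right)
next
  case (base x)
  with assms(1) show ?case by blast
next
  case (mult u v)
  obtain s2 r2 where s2: "s2 \<in> mult_closure X" "s2 * r = r2 * v" using mult.IH(2) by blast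
  obtain s1 r1 where s1: "s1 \<in> mult_closure X" "s1 * r2 = r1 * u" using mult.IH(1) by blast
  from s1(1) s2(1) have "s1 * s2 \<in> mult_closure X" by (rule mult_closure.mult)
  moreover have "(s1 * s2) * r = r1 * (u * v)" using s1(2) s2(2) by (metis mult.assoc)
  ultimately show ?case by blast
qed

lemma mult_closure_den:
  assumes "\<forall>x\<in>X. \<forall>r. r * x = 0 \<longrightarrow> (\<exists>t\<in>mult_closure X. t * r = 0)"
    and "u \<in> mult_closure X" "r * u = 0"
  shows "\<exists>t\<in>mult_closure X. t * r = 0"
  using assms(2,3)
proof (induction arbitrary: r)
  case one
  then show ?case using mult_closure.one by force
next
  case (base x)
  with assms(1) show ?case by blast
next
  case (mult u v)
  from \<open>r * (u * v) = 0\<close> have "(r * u) * v = 0" by (simp add: mult.assoc)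
  with mult.IH(2) obtain t2 where t2: "t2 \<in> mult_closure X" "t2 * (r * u) = 0" by blast
  then have "(t2 * r) * u = 0" by (simp add: mult.assoc)
  with mult.IH(1) obtain t1 where t1: "t1 \<in> mult_closure X" "t1 * (t2 * r) = 0" by blast
  from t1(1) t2(1) have "t1 * t2 \<in> mult_closure X" by (rule mult_closure.mult)
  moreover from t1(2) have "(t1 * t2) * r = 0" by (simp add: mult.assoc)
  ultimately show ?case by blast
qed

lemma mult_closure_cancel_on_left_ideal:
  assumes "\<forall>x\<in>X. \<forall>w\<in>C. x * w = 0 \<longrightarrow> w = 0" and "\<forall>x. \<forall>w\<in>C. x * w \<in> C"
    and "u \<in> mult_closure X" "w \<in> C" "u * w = 0"
  shows "w = 0"
  using assms(3-5)
proof (induction arbitrary: w)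
  case (mult u v)
  then show ?case using assms(2) by (metis mult.assoc)
qed (use assms(1) in auto)

lemma left_den_mult_closure_Union:
  assumes "\<forall>S\<in>\<S>. left_den S" "0 \<notin> mult_closure (\<Union>\<S>)"
  shows "left_den (mult_closure (\<Union>\<S>))"
proof -
  let ?M = "mult_closure (\<Union>\<S>)"
  have ore: "\<forall>x\<in>\<Union>\<S>. \<forall>r. \<exists>s\<in>?M. \<exists>r'. s * r = r' * x"
  proof (intro ballI allI)
    fix x r assume "x \<in> \<Union>\<S>"
    then obtain S where "S \<in> \<S>" "x \<in> S" by blast
    with assms(1) obtain s r' where "s \<in> S" "s * r = r' * x"
      using left_den_imp_left_ore left_ore_common_multiple by blast
    with \<open>S \<in> \<S>\<close> show "\<exists>s\<in>?M. \<exists>r'. s * r = r' * x" by (blast intro: mult_closure.base)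
  qed
  have den: "\<forall>x\<in>\<Union>\<S>. \<forall>r. r * x = 0 \<longrightarrow> (\<exists>t\<in>?M. t * r = 0)"
  proof (intro ballI allI impI)
    fix x r assume "x \<in> \<Union>\<S>" "r * x = 0"
    then obtain S where "S \<in> \<S>" "x \<in> S" by blast
    with assms(1) \<open>r * x = 0\<close> have "r \<in> ass S" using left_den_mult_zero_imp_ass by blast
    then obtain t where "t \<in> S" "t * r = 0" unfolding ass_def by blast
    with \<open>S \<in> \<S>\<close> show "\<exists>t\<in>?M. t * r = 0" by (blast intro: mult_closure.base)
  qed
  have "mult_subset ?M"
    using assms(2) unfolding mult_subset_def by (auto intro: mult_closure.one mult_closure.mult)
  moreover have "\<forall>r. \<forall>s\<in>?M. \<exists>s'\<in>?M. \<exists>r'. s' * r = r' * s"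
    using mult_closure_ore[OF ore] by blast
  moreover have "\<forall>r. \<forall>s\<in>?M. r * s = 0 \<longrightarrow> (\<exists>t\<in>?M. t * r = 0)"
    using mult_closure_den[OF den] by blast
  ultimately show ?thesis unfolding left_den_def left_ore_def by (intro conjI)
qed

lemma mult_subset_meets_Inter_ass:
  assumes "mult_subset T" "finite \<F>" "\<forall>S\<in>\<F>. left_ore S \<and> T \<inter> ass S \<noteq> {}"
  shows "\<exists>y\<in>T. \<forall>S\<in>\<F>. y \<in> ass S"
  using assms(2,3)
proof (induction rule: finite_induct)
  case empty
  then show ?case using assms(1) unfolding mult_subset_def by blast
next
  case (insert S \<F>)
  then obtain y x where y: "y \<in> T" "\<forall>S'\<in>\<F>. y \<in> ass S'" and x: "x \<in> T" "x \<in> ass S"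
    by blast
  have "left_ore S" using insert.prems by blast
  then have "y * x \<in> ass S" using x(2) by (rule ass_mult_left)
  moreover have "\<forall>S'\<in>\<F>. y * x \<in> ass S'" using y(2) ass_mult_right by blast
  moreover have "y * x \<in> T" using x(1) y(1) assms(1) unfolding mult_subset_def by blast
  ultimately show ?case by blast
qed

definition maxDen_l_meeting_ass :: "'a::ring_1 set \<Rightarrow> 'a set set" where
  "maxDen_l_meeting_ass S = {T \<in> maxDen_l. S \<inter> ass T \<noteq> {}}"

lemma maxDen_l_cancel_on_Inter_ass:
  fixes a :: "'a::ring_1"
  assumes "left_localizable TYPE('a)" "S \<in> maxDen_l" "a \<in> S"
    and "\<forall>T\<in>maxDen_l_meeting_ass S. w \<in> ass T" "a * w = 0"
  shows "w = 0"
proof (rule ccontr)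
  assume "w \<noteq> 0"
  then obtain T where T: "T \<in> maxDen_l" "w \<in> T"
    using assms(1) left_localizable_imp_in_maxDen_l by blast
  then have "a \<in> ass T" using left_den_mult_zero_imp_ass maxDen_l_imp_left_den assms(5) by blast
  with T assms(3) have "w \<in> ass T" using assms(4) unfolding maxDen_l_meeting_ass_def by blast
  with T show False
    using mult_subset_disjoint_ass left_den_imp_mult_subset maxDen_l_imp_left_den by blast
qed

lemma maxDen_l_meets_ass:
  fixes S T :: "'a::ring_1 set"
  assumes loc: "left_localizable TYPE('a)" and fin: "finite (maxDen_l :: 'a set set)"
    and S: "S \<in> maxDen_l" and T: "T \<in> maxDen_l" and "S \<noteq> T"
  shows "S \<inter> ass T \<noteq> {}"
proof
  assume disj: "S \<inter> ass T = {}"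
  have ore: "\<forall>U\<in>maxDen_l_meeting_ass V. left_ore U" for V :: "'a set"
    unfolding maxDen_l_meeting_ass_def using maxDen_l_imp_left_den left_den_imp_left_ore by blast
  have "\<exists>y\<in>V. \<forall>U\<in>maxDen_l_meeting_ass V. y \<in> ass U" if "V \<in> maxDen_l" for V :: "'a set"
  proof (rule mult_subset_meets_Inter_ass)
    show "mult_subset V" using that maxDen_l_imp_left_den left_den_imp_mult_subset by blast
    show "finite (maxDen_l_meeting_ass V)" using fin unfolding maxDen_l_meeting_ass_def by auto
    show "\<forall>U\<in>maxDen_l_meeting_ass V. left_ore U \<and> V \<inter> ass U \<noteq> {}"
      using ore unfolding maxDen_l_meeting_ass_def by blast
  qed
  then obtain y z where y: "y \<in> S" "\<forall>U\<in>maxDen_l_meeting_ass S. y \<in> ass U"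
    and z: "z \<in> T" "\<forall>U\<in>maxDen_l_meeting_ass T. z \<in> ass U"
    using S T by meson
  define C where "C = {w. \<forall>U\<in>maxDen_l_meeting_ass S \<union> maxDen_l_meeting_ass T. w \<in> ass U}"
  have C_left_ideal: "\<forall>x. \<forall>w\<in>C. x * w \<in> C"
    unfolding C_def using ore ass_mult_left by blast
  have yz_in_C: "y * z \<in> C" unfolding C_def using y z ore ass_mult_left ass_mult_right by blast
  have yz_nonzero: "y * z \<noteq> 0"
    using y(1) z(1) disj left_den_mult_zero_imp_ass maxDen_l_imp_left_den[OF T] by blast
  have cancel: "\<forall>x\<in>\<Union>{S, T}. \<forall>w\<in>C. x * w = 0 \<longrightarrow> w = 0"
    using maxDen_l_cancel_on_Inter_ass[OF loc S] maxDen_l_cancel_on_Inter_ass[OF loc T]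
    unfolding C_def by blast
  have "0 \<notin> mult_closure (\<Union>{S, T})"
  proof
    assume "0 \<in> mult_closure (\<Union>{S, T})"
    from mult_closure_cancel_on_left_ideal[OF cancel C_left_ideal this yz_in_C]
    show False using yz_nonzero by simp
  qed
  moreover have "\<forall>U\<in>{S, T}. left_den U" using S T maxDen_l_imp_left_den by blast
  ultimately have den: "left_den (mult_closure (\<Union>{S, T}))"
    by (intro left_den_mult_closure_Union)
  have "S \<subseteq> mult_closure (\<Union>{S, T})" "T \<subseteq> mult_closure (\<Union>{S, T})"
    using subset_mult_closure[of "\<Union>{S, T}"] by auto
  then have "mult_closure (\<Union>{S, T}) = S" "mult_closure (\<Union>{S, T}) = T"
    using maxDen_l_maximal[OF S den] maxDen_l_maximal[OF T den] by auto
  with \<open>S \<noteq> T\<close> show False by simp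
qed

lemma maxDen_l_Int_Inter_ass:
  fixes S :: "'a::ring_1 set"
  assumes "left_localizable TYPE('a)" "S \<in> maxDen_l"
  shows "S \<inter> (\<Inter>T\<in>maxDen_l - {S}. ass T) = (\<Inter>T\<in>maxDen_l - {S}. ass T) - {0}"
proof -
  have "mult_subset S" using assms(2) by (intro left_den_imp_mult_subset maxDen_l_imp_left_den)
  then have "0 \<notin> S" unfolding mult_subset_def by simp
  moreover have "x \<in> S" if x: "x \<in> (\<Inter>T\<in>maxDen_l - {S}. ass T)" "x \<noteq> 0" for x
  proof -
    obtain T where T: "T \<in> maxDen_l" "x \<in> T"
      using left_localizable_imp_in_maxDen_l[OF assms(1) x(2)] by blast
    have "mult_subset T" using T(1) by (intro left_den_imp_mult_subset maxDen_l_imp_left_den)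
    then have "x \<notin> ass T" using T(2) mult_subset_disjoint_ass by blast
    with x(1) T have "T = S" by blast
    with T(2) show ?thesis by simp
  qed
  ultimately show ?thesis by blast
qed

lemma maxDen_l_Inter_ass_nonzero:
  fixes S :: "'a::ring_1 set"
  assumes "left_localizable TYPE('a)" "finite (maxDen_l :: 'a set set)" "S \<in> maxDen_l"
  shows "(\<Inter>T\<in>maxDen_l - {S}. ass T) - {0} \<noteq> {}"
proof -
  have ms: "mult_subset S"
    using assms(3) left_den_imp_mult_subset maxDen_l_imp_left_den by blast
  have "\<forall>T\<in>maxDen_l - {S}. left_ore T \<and> S \<inter> ass T \<noteq> {}"
    using maxDen_l_meets_ass[OF assms(1,2,3)] maxDen_l_imp_left_den left_den_imp_left_ore by blast
  then obtain y where "y \<in> S" "\<forall>T\<in>maxDen_l - {S}. y \<in> ass T"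
    using mult_subset_meets_Inter_ass[OF ms] assms(2) by blast
  moreover have "y \<noteq> 0" using \<open>y \<in> S\<close> ms unfolding mult_subset_def by blast
  ultimately show ?thesis by blast
qed

theorem corollary3p6:
  fixes S :: "nat \<Rightarrow> 'a::ring_1 set" and n :: nat
  assumes "left_localizable TYPE('a)"
    and "n \<ge> 2"
    and "inj_on S {1..n}"
    and "maxDen_l = S ` {1..n}"
  shows "\<forall>i\<in>{1..n}.
           S i \<inter> (\<Inter>j\<in>{1..n} - {i}. ass (S j)) = (\<Inter>j\<in>{1..n} - {i}. ass (S j)) - {0}
         \<and> (\<Inter>j\<in>{1..n} - {i}. ass (S j)) - {0} \<noteq> {}"
proof
  fix i assume i: "i \<in> {1..n}"
  have "S ` ({1..n} - {i}) = maxDen_l - {S i}"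
    using assms(3,4) i by (simp add: inj_on_image_set_diff)
  then have "(\<Inter>j\<in>{1..n} - {i}. ass (S j)) = (\<Inter>T\<in>maxDen_l - {S i}. ass T)"
    by (metis image_image)
  moreover have "S i \<in> maxDen_l" "finite (maxDen_l :: 'a set set)" unfolding assms(4) using i by simp_all
  ultimately show "S i \<inter> (\<Inter>j\<in>{1..n} - {i}. ass (S j)) = (\<Inter>j\<in>{1..n} - {i}. ass (S j)) - {0}
         \<and> (\<Inter>j\<in>{1..n} - {i}. ass (S j)) - {0} \<noteq> {}"
    using maxDen_l_Int_Inter_ass[OF assms(1)] maxDen_l_Inter_ass_nonzero[OF assms(1)] by simp
qed

end
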